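(* Let $g\in C(\mathbb{R},\mathbb{R})$ and $\mathcal{G}=(g,\infty)=\{f\in C(\mathbb{R},\mathbb{R}):(\forall x\in\mathbb{R})\,f(x)>g(x)\}$. Then $\mathcal{K}_\mathcal{G}=\{\mathrm{CL}(\mathbb{R})\cap\mathcal{P}(X):X\subseteq\mathbb{R}\}$.
   Context: $\mathrm{CL}(\mathbb{R})$ is the family of closed subsets of $\mathbb{R}$ and $\mathcal{P}(X)$ the power set of $X$. For $\mathcal{G}\subseteq C(\mathbb{R},\mathbb{R})$ let $R_\mathcal{G}=\{(f,E)\in C(\mathbb{R},\mathbb{R})\times\mathrm{CL}(\mathbb{R}):(\exists h\in\mathcal{G})\, f\restriction E=h\restriction E\}$; for $\mathcal{F}\subseteq C(\mathbb{R},\mathbb{R})$ put $E_\mathcal{G}(\mathcal{F})=\{E\in\mathrm{CL}(\mathbb{R}):(\forall f\in\mathcal{F})\,(f,E)\in R_\mathcal{G}\}$, and let $\mathcal{K}_\mathcal{G}=\{E_\mathcal{G}(\mathcal{F}):\mathcal{F}\subseteq C(\mathbb{R},\mathbb{R})\}$. *)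

theory Defs
  imports "HOL-Analysis.Analysis"
begin

definition CRR :: "(real \<Rightarrow> real) set" where
  "CRR = {f. continuous_on UNIV f}"

definition CLR :: "real set set" where
  "CLR = {E. closed E}"

definition R_G :: "(real \<Rightarrow> real) set \<Rightarrow> ((real \<Rightarrow> real) \<times> real set) set" where
  "R_G G = {(f, E). f \<in> CRR \<and> E \<in> CLR \<and> (\<exists>h\<in>G. \<forall>x\<in>E. f x = h x)}"

definition E_G :: "(real \<Rightarrow> real) set \<Rightarrow> (real \<Rightarrow> real) set \<Rightarrow> real set set" where
  "E_G G F = {E \<in> CLR. \<forall>f\<in>F. (f, E) \<in> R_G G}"

definition K_G :: "(real \<Rightarrow> real) set \<Rightarrow> real set set set" where
  "K_G G = {E_G G F | F. F \<subseteq> CRR}"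

end

theory Submission
  imports Defs
begin

text \<open>A continuous function lying strictly above \<open>g\<close> on a closed set \<open>E\<close> agrees on \<open>E\<close> with
  a continuous function lying strictly above \<open>g\<close> everywhere, namely
  \<open>max f (g + infdist \<cdot> E)\<close>. Hence, for \<open>\<G> = (g,\<infinity>)\<close>, a closed set \<open>E\<close> lies in \<open>E\<^sub>\<G>(\<F>)\<close>
  exactly when it is contained in \<open>X\<^sub>\<F> = {x. \<forall>f\<in>\<F>. f x > g x}\<close>, and every \<open>X \<subseteq> \<real>\<close> is
  such an \<open>X\<^sub>\<F>\<close>, witnessed by \<open>\<F> = {g + \<bar>\<cdot> - a\<bar> | a \<notin> X}\<close>.\<close>

lemma continuous_extension_above:
  fixes f g :: "'a::metric_space \<Rightarrow> real"
  assumes g: "continuous_on UNIV g" and f: "continuous_on UNIV f" and E: "closed E"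
    and above: "\<forall>x\<in>E. g x < f x"
  obtains h where "continuous_on UNIV h" "\<forall>x. g x < h x" "\<forall>x\<in>E. h x = f x"
proof (cases "E = {}")
  case True
  show ?thesis
    by (rule that[of "\<lambda>x. g x + 1"]) (use g True in \<open>auto intro!: continuous_intros\<close>)
next
  case False
  define h where "h x = max (f x) (g x + infdist x E)" for x
  have "g x < h x" for x
  proof (cases "x \<in> E")
    case True
    then show ?thesis using above by (simp add: h_def)
  next
    case False
    then have "0 < infdist x E" using infdist_pos_not_in_closed[OF E] \<open>E \<noteq> {}\<close> by blast
    then show ?thesis by (simp add: h_def)
  qed
  moreover have "continuous_on UNIV h"
    unfolding h_def using f g by (intro continuous_intros continuous_on_infdist)
  moreover have "\<forall>x\<in>E. h x = f x"
    using above by (auto simp: h_def infdist_zero max_def)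
  ultimately show ?thesis using that by blast
qed

lemma R_G_above_iff:
  assumes "g \<in> CRR" "f \<in> CRR" "closed E"
  shows "(f, E) \<in> R_G {h \<in> CRR. \<forall>x. h x > g x} \<longleftrightarrow> (\<forall>x\<in>E. f x > g x)"
proof
  assume "(f, E) \<in> R_G {h \<in> CRR. \<forall>x. h x > g x}"
  then show "\<forall>x\<in>E. f x > g x" unfolding R_G_def by auto
next
  assume "\<forall>x\<in>E. f x > g x"
  with assms obtain h where "continuous_on UNIV h" "\<forall>x. g x < h x" "\<forall>x\<in>E. h x = f x"
    unfolding CRR_def by (auto elim: continuous_extension_above)
  with assms show "(f, E) \<in> R_G {h \<in> CRR. \<forall>x. h x > g x}"
    by (auto simp: R_G_def CRR_def CLR_def)
qed

lemma E_G_above_eq: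
  assumes "g \<in> CRR" "F \<subseteq> CRR"
  shows "E_G {h \<in> CRR. \<forall>x. h x > g x} F = CLR \<inter> Pow {x. \<forall>f\<in>F. f x > g x}"
  using R_G_above_iff[OF assms(1)] assms(2) unfolding E_G_def CLR_def by blast

lemma CRR_family_above_exactly_on:
  assumes "g \<in> CRR"
  obtains F where "F \<subseteq> CRR" "{x. \<forall>f\<in>F. f x > g x} = X"
proof
  let ?F = "{(\<lambda>t. g t + \<bar>t - a\<bar>) | a. a \<notin> X}"
  show "?F \<subseteq> CRR"
    using assms unfolding CRR_def by (auto intro!: continuous_intros)
  show "{x. \<forall>f\<in>?F. f x > g x} = X"
    by fastforce
qed

theorem theorem4p1:
  fixes g :: "real \<Rightarrow> real"
  assumes "g \<in> CRR"
  shows "K_G {f \<in> CRR. \<forall>x. f x > g x} = {CLR \<inter> Pow X | X. X \<subseteq> (UNIV :: real set)}"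
proof
  show "K_G {f \<in> CRR. \<forall>x. f x > g x} \<subseteq> {CLR \<inter> Pow X | X. X \<subseteq> (UNIV :: real set)}"
    unfolding K_G_def using E_G_above_eq[OF assms] by blast
next
  show "{CLR \<inter> Pow X | X. X \<subseteq> (UNIV :: real set)} \<subseteq> K_G {f \<in> CRR. \<forall>x. f x > g x}"
  proof clarify
    fix X :: "real set"
    obtain F where "F \<subseteq> CRR" "{x. \<forall>f\<in>F. f x > g x} = X"
      using CRR_family_above_exactly_on[OF assms] .
    then show "CLR \<inter> Pow X \<in> K_G {f \<in> CRR. \<forall>x. f x > g x}"
      unfolding K_G_def using E_G_above_eq[OF assms] by blast
  qed
qed

end
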